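(* Let $\mathcal{X},\mathcal{A}$ be finite sets, let $P_{A|X}$ be a channel, and for $n\ge1$ let $P^{\times n}_{XAB}(x^n,a^n,b^n)=|\mathcal{X}|^{-n}\prod_{i=1}^n P_{A|X}(a_i|x_i)P_{A|X}(b_i|x_i)$ on $\mathcal{X}^n\times\mathcal{A}^n\times\mathcal{A}^n$. Let $\omega_{\mathrm{ns}}(n)=\sup_Q\sum_{x^n,a^n,b^n}P^{\times n}_{XAB}(x^n,a^n,b^n)Q(x^n,x^n|a^n,b^n)$, the supremum over all no-signalling conditional distributions $Q$. Then $$\limsup_{n\to\infty}\frac{\log\omega_{\mathrm{ns}}(n)}{n}\le\max_{Q_{XA}}\Big(I(X;A)_Q-2D(Q_{A|X}\,\|\,P_{A|X}\mid Q_X)\Big)-\log|\mathcal{X}|,$$ the maximum being over all probability distributions $Q_{XA}$ on $\mathcal{X}\times\mathcal{A}$.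
   Context: Logarithms are base $2$. A no-signalling conditional distribution is a conditional distribution $Q(y,z|a^n,b^n)$ on $\mathcal{X}^n\times\mathcal{X}^n$ given $(a^n,b^n)\in\mathcal{A}^n\times\mathcal{A}^n$ such that $\sum_y Q(y,z|a^n,b^n)$ does not depend on $a^n$ and $\sum_z Q(y,z|a^n,b^n)$ does not depend on $b^n$. $I(X;A)_Q=H(X)_Q+H(A)_Q-H(X,A)_Q$ (Shannon entropies); $D(P\|Q)=\sum_x P(x)\log\frac{P(x)}{Q(x)}$; $D(Q_{A|X}\|P_{A|X}\mid Q_X)=\sum_x Q_X(x)D(Q_{A|X=x}\|P_{A|X=x})$. *)

theory Defs
  imports "HOL-Analysis.Analysis"
begin

text \<open>Logarithms base 2; note log 2 0 = 0 in Isabelle, so p * log 2 p = 0 for p = 0.\<close>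

definition channel :: "('x::finite \<Rightarrow> 'a::finite \<Rightarrow> real) \<Rightarrow> bool" where
  "channel P \<longleftrightarrow> (\<forall>x a. P x a \<ge> 0) \<and> (\<forall>x. (\<Sum>a\<in>UNIV. P x a) = 1)"

definition seqs :: "nat \<Rightarrow> 'b list set" where
  "seqs n = {xs. length xs = n}"

definition Pn :: "('x::finite \<Rightarrow> 'a::finite \<Rightarrow> real) \<Rightarrow> nat \<Rightarrow> 'x list \<Rightarrow> 'a list \<Rightarrow> 'a list \<Rightarrow> real" where
  "Pn P n xs as bs = (1 / real CARD('x)) ^ n * (\<Prod>i<n. P (xs!i) (as!i) * P (xs!i) (bs!i))"

definition no_signalling ::
  "nat \<Rightarrow> ('x::finite list \<Rightarrow> 'x list \<Rightarrow> 'a::finite list \<Rightarrow> 'a list \<Rightarrow> real) \<Rightarrow> bool" where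
  "no_signalling n Q \<longleftrightarrow>
     (\<forall>y\<in>seqs n. \<forall>z\<in>seqs n. \<forall>a\<in>seqs n. \<forall>b\<in>seqs n. Q y z a b \<ge> 0) \<and>
     (\<forall>a\<in>seqs n. \<forall>b\<in>seqs n. (\<Sum>y\<in>seqs n. \<Sum>z\<in>seqs n. Q y z a b) = 1) \<and>
     (\<forall>z\<in>seqs n. \<forall>a\<in>seqs n. \<forall>a'\<in>seqs n. \<forall>b\<in>seqs n.
        (\<Sum>y\<in>seqs n. Q y z a b) = (\<Sum>y\<in>seqs n. Q y z a' b)) \<and>
     (\<forall>y\<in>seqs n. \<forall>a\<in>seqs n. \<forall>b\<in>seqs n. \<forall>b'\<in>seqs n.
        (\<Sum>z\<in>seqs n. Q y z a b) = (\<Sum>z\<in>seqs n. Q y z a b'))"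

definition omega_ns :: "('x::finite \<Rightarrow> 'a::finite \<Rightarrow> real) \<Rightarrow> nat \<Rightarrow> real" where
  "omega_ns P n = Sup {(\<Sum>xs\<in>seqs n. \<Sum>as\<in>seqs n. \<Sum>bs\<in>seqs n. Pn P n xs as bs * Q xs xs as bs)
                       | Q. no_signalling n Q}"

definition pdist :: "('b::finite \<Rightarrow> real) \<Rightarrow> bool" where
  "pdist p \<longleftrightarrow> (\<forall>v. p v \<ge> 0) \<and> (\<Sum>v\<in>UNIV. p v) = 1"

definition entropy :: "('b::finite \<Rightarrow> real) \<Rightarrow> real" where
  "entropy p = - (\<Sum>v\<in>UNIV. p v * log 2 (p v))"

definition margX :: "('x::finite \<times> 'a::finite \<Rightarrow> real) \<Rightarrow> 'x \<Rightarrow> real" where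
  "margX Q x = (\<Sum>a\<in>UNIV. Q (x, a))"

definition margA :: "('x::finite \<times> 'a::finite \<Rightarrow> real) \<Rightarrow> 'a \<Rightarrow> real" where
  "margA Q a = (\<Sum>x\<in>UNIV. Q (x, a))"

definition mutual_info :: "('x::finite \<times> 'a::finite \<Rightarrow> real) \<Rightarrow> real" where
  "mutual_info Q = entropy (margX Q) + entropy (margA Q) - entropy Q"

text \<open>Conditional relative entropy D(Q_{A|X} || P_{A|X} | Q_X); only meaningful (finite) when
  Q(x,a) > 0 implies P(a|x) > 0, see abs_cont.\<close>
definition cond_rel_entropy :: "('x::finite \<times> 'a::finite \<Rightarrow> real) \<Rightarrow> ('x \<Rightarrow> 'a \<Rightarrow> real) \<Rightarrow> real" where
  "cond_rel_entropy Q P = (\<Sum>x\<in>UNIV. margX Q x *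
      (\<Sum>a\<in>UNIV. (Q (x, a) / margX Q x) * log 2 ((Q (x, a) / margX Q x) / P x a)))"

definition abs_cont :: "('x::finite \<times> 'a::finite \<Rightarrow> real) \<Rightarrow> ('x \<Rightarrow> 'a \<Rightarrow> real) \<Rightarrow> bool" where
  "abs_cont Q P \<longleftrightarrow> (\<forall>x a. Q (x, a) > 0 \<longrightarrow> P x a > 0)"

end

theory Submission
  imports Defs
begin

text \<open>
  Let Phi(p) = sum_a sqrt (sum_x p(x) P(a|x)^2) and let p maximise Phi over the input distributions.
  Perturbing p towards point masses yields the first-order conditions: R(a) = sqrt (sum_x p(x) P(a|x)^2) / Phi(p)
  is a distribution, R(a) = 0 forces P(a|x) = 0, and sum_a P(a|x)^2 / R(a) <= Phi(p)^2 for every x.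
  For a no-signalling strategy the diagonal Q(x,x|a,b) is at most the geometric mean of the two parties'
  marginals; AM-GM separates the sums over a and b, and Cauchy-Schwarz against the product distribution R^n
  bounds the winning probability by (Phi(p)^2 / |X|)^n.  On the other side,
  Q(x,a) = p(x) P(a|x)^2 / (Phi(p) sqrt (sum_x' p(x') P(a|x')^2)) is a joint distribution with marginals p and R,
  and for it I(X;A) - 2 D(Q_A|X || P_A|X | Q_X) equals 2 log Phi(p).
\<close>

lemma nonpos_if_le_mult_small:
  fixes D K :: real
  assumes "0 \<le> K" and le: "\<And>t. 0 < t \<Longrightarrow> t \<le> 1 \<Longrightarrow> D \<le> t * K"
  shows "D \<le> 0"
proof (rule field_le_epsilon)
  fix e :: real
  assume "0 < e"
  define t where "t = min 1 (e / (K + 1))"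
  have t: "0 < t" "t \<le> 1"
    using \<open>0 < e\<close> \<open>0 \<le> K\<close> by (auto simp: t_def)
  have "t * K \<le> e / (K + 1) * K"
    using \<open>0 \<le> K\<close> by (intro mult_right_mono) (auto simp: t_def)
  also have "\<dots> \<le> e"
    using \<open>0 < e\<close> \<open>0 \<le> K\<close> by (simp add: field_simps)
  finally show "D \<le> 0 + e"
    using le[OF t] by simp
qed

lemma sqrt_ge_second_order:
  fixes y B :: real
  assumes "0 \<le> y" "0 \<le> B"
  shows "sqrt B + (y - B) / (2 * sqrt B) - (y - B)^2 / (2 * B * sqrt B) \<le> sqrt y"
proof (cases "B = 0")
  case True
  then show ?thesis
    using assms by simp
next
  case False
  define s b where "s = sqrt y" and "b = sqrt B"
  have "0 < b" "0 \<le> s"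
    using False assms by (auto simp: s_def b_def)
  have yB: "y = s^2" "B = b^2"
    using assms by (simp_all add: s_def b_def)
  have "b + (s^2 - b^2) / (2 * b) - (s^2 - b^2)^2 / (2 * b^2 * b)
      = s - (s - b)^2 * (s^2 + 2 * s * b) / (2 * b^3)"
    using \<open>0 < b\<close> by (simp add: field_simps power2_eq_square power3_eq_cube)
  also have "\<dots> \<le> s"
    using \<open>0 < b\<close> \<open>0 \<le> s\<close> by simp
  finally show ?thesis
    using \<open>0 < b\<close> \<open>0 \<le> s\<close> unfolding yB by simp
qed

definition sq_weight :: "('x::finite \<Rightarrow> 'a \<Rightarrow> real) \<Rightarrow> ('x \<Rightarrow> real) \<Rightarrow> 'a \<Rightarrow> real" where
  "sq_weight P p a = (\<Sum>x\<in>UNIV. p x * (P x a)^2)"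

definition sqrt_weight_sum :: "('x::finite \<Rightarrow> 'a::finite \<Rightarrow> real) \<Rightarrow> ('x \<Rightarrow> real) \<Rightarrow> real" where
  "sqrt_weight_sum P p = (\<Sum>a\<in>UNIV. sqrt (sq_weight P p a))"

definition shift_toward :: "('x \<Rightarrow> real) \<Rightarrow> 'x \<Rightarrow> real \<Rightarrow> 'x \<Rightarrow> real" where
  "shift_toward p x0 t y = (1 - t) * p y + t * (if y = x0 then 1 else 0)"

lemma pdist_shift_toward:
  assumes "pdist p" "0 \<le> t" "t \<le> 1"
  shows "pdist (shift_toward p x0 t)"
  using assms unfolding pdist_def shift_toward_def
  by (simp add: sum.distrib sum_distrib_left[symmetric])

lemma sq_weight_shift_toward:
  "sq_weight P (shift_toward p x0 t) a = (1 - t) * sq_weight P p a + t * (P x0 a)^2"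
proof -
  have "sq_weight P (shift_toward p x0 t) a
      = (\<Sum>x\<in>UNIV. (1 - t) * (p x * (P x a)^2) + t * (if x = x0 then (P x a)^2 else 0))"
    unfolding sq_weight_def shift_toward_def by (intro sum.cong) (auto simp: algebra_simps)
  then show ?thesis
    unfolding sq_weight_def by (simp add: sum.distrib sum_distrib_left[symmetric])
qed

lemma sq_weight_nonneg: "pdist p \<Longrightarrow> 0 \<le> sq_weight P p a"
  unfolding sq_weight_def pdist_def by (intro sum_nonneg) simp

lemma sqrt_sq_weight_shift_toward_ge:
  assumes "pdist p" "0 \<le> t" "t \<le> 1"
  shows "(1 - t) * sqrt (sq_weight P p a) \<le> sqrt (sq_weight P (shift_toward p x0 t) a)"
proof -
  have "1 - t \<le> sqrt (1 - t)"
    using assms by (intro real_le_rsqrt) (simp add: power2_eq_square mult_left_le)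
  then have "(1 - t) * sqrt (sq_weight P p a) \<le> sqrt (1 - t) * sqrt (sq_weight P p a)"
    by (simp add: mult_right_mono sq_weight_nonneg[OF \<open>pdist p\<close>])
  also have "\<dots> \<le> sqrt (sq_weight P (shift_toward p x0 t) a)"
    using assms by (simp add: sq_weight_shift_toward flip: real_sqrt_mult)
  finally show ?thesis .
qed

lemma pdist_argmax_exists:
  fixes f :: "('x::finite \<Rightarrow> real) \<Rightarrow> real"
  assumes "continuous_on UNIV (\<lambda>v::real^'x. f (\<lambda>i. v $ i))"
  shows "\<exists>p. pdist p \<and> (\<forall>q. pdist q \<longrightarrow> f q \<le> f p)"
proof -
  define S where "S = {v::real^'x. (\<forall>i. 0 \<le> v $ i) \<and> (\<Sum>i\<in>UNIV. v $ i) = 1}"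
  have "closed S"
    unfolding S_def
    by (intro closed_Collect_conj closed_Collect_all closed_Collect_le closed_Collect_eq continuous_intros)
  moreover have "bounded S"
  proof -
    have "norm v \<le> 1" if "v \<in> S" for v
      using norm_le_l1_cart[of v] that by (simp add: S_def)
    then show ?thesis
      unfolding bounded_iff by blast
  qed
  ultimately have "compact S"
    by (simp add: compact_eq_bounded_closed)
  moreover have "(\<chi> i. 1 / real CARD('x)) \<in> S"
    by (simp add: S_def)
  ultimately obtain v where v: "v \<in> S" "\<forall>w\<in>S. f (\<lambda>i. w $ i) \<le> f (\<lambda>i. v $ i)"
    using continuous_attains_sup[of S "\<lambda>v. f (\<lambda>i. v $ i)"]
      continuous_on_subset[OF assms subset_UNIV] by blast
  show ?thesis
  proof (intro exI[of _ "\<lambda>i. v $ i"] conjI allI impI)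
    show "pdist (\<lambda>i. v $ i)"
      using v(1) by (simp add: S_def pdist_def)
    fix q :: "'x \<Rightarrow> real"
    assume "pdist q"
    then have "(\<chi> i. q i) \<in> S"
      by (simp add: S_def pdist_def)
    then show "f q \<le> f (\<lambda>i. v $ i)"
      using v(2) by fastforce
  qed
qed

lemma sqrt_weight_sum_argmax_exists:
  "\<exists>p. pdist p \<and> (\<forall>q. pdist q \<longrightarrow> sqrt_weight_sum P q \<le> sqrt_weight_sum P p)"
  by (rule pdist_argmax_exists)
    (simp add: sqrt_weight_sum_def sq_weight_def continuous_intros)

lemma maximizer_sq_weight_zero:
  fixes P :: "'x::finite \<Rightarrow> 'a::finite \<Rightarrow> real"
  assumes "pdist p"
    and max: "\<And>q. pdist q \<Longrightarrow> sqrt_weight_sum P q \<le> sqrt_weight_sum P p"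
    and zero: "sq_weight P p a0 = 0"
  shows "P x0 a0 = 0"
proof -
  define \<Phi> where "\<Phi> = sqrt_weight_sum P p"
  \<comment> \<open>shifting mass \<open>t\<close> to \<open>x0\<close> gains order \<open>sqrt t\<close> at \<open>a0\<close> but loses only order \<open>t\<close> elsewhere\<close>
  have "(P x0 a0)^2 \<le> t * \<Phi>^2" if t: "0 < t" "t \<le> 1" for t
  proof -
    define q where "q = shift_toward p x0 t"
    have "(1 - t) * sqrt (sq_weight P p a) + (if a = a0 then sqrt t * \<bar>P x0 a0\<bar> else 0)
        \<le> sqrt (sq_weight P q a)" for a
    proof (cases "a = a0")
      case True
      then show ?thesis
        by (simp add: q_def sq_weight_shift_toward zero real_sqrt_mult)
    next
      case False
      then show ?thesis
        using sqrt_sq_weight_shift_toward_ge[OF \<open>pdist p\<close>, of t] t by (simp add: q_def)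
    qed
    then have "(\<Sum>a\<in>UNIV. (1 - t) * sqrt (sq_weight P p a) + (if a = a0 then sqrt t * \<bar>P x0 a0\<bar> else 0))
        \<le> sqrt_weight_sum P q"
      unfolding sqrt_weight_sum_def by (rule sum_mono)
    then have "(1 - t) * \<Phi> + sqrt t * \<bar>P x0 a0\<bar> \<le> sqrt_weight_sum P q"
      by (simp add: \<Phi>_def sqrt_weight_sum_def sum.distrib sum_distrib_left)
    also have "\<dots> \<le> \<Phi>"
      using max pdist_shift_toward[OF \<open>pdist p\<close>] t by (simp add: q_def \<Phi>_def)
    finally have "sqrt t * \<bar>P x0 a0\<bar> \<le> t * \<Phi>"
      by (simp add: algebra_simps)
    then have "(sqrt t * \<bar>P x0 a0\<bar>)^2 \<le> (t * \<Phi>)^2"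
      using t by (intro power_mono) simp_all
    then have "t * (P x0 a0)^2 \<le> t * (t * \<Phi>^2)"
      using t by (simp add: power_mult_distrib power2_eq_square[of t])
    then show ?thesis
      using t by simp
  qed
  then have "(P x0 a0)^2 \<le> 0"
    by (intro nonpos_if_le_mult_small[of "\<Phi>^2"]) auto
  then show ?thesis
    by simp
qed

lemma maximizer_sum_sq_div_sqrt_le:
  fixes P :: "'x::finite \<Rightarrow> 'a::finite \<Rightarrow> real"
  assumes "pdist p"
    and max: "\<And>q. pdist q \<Longrightarrow> sqrt_weight_sum P q \<le> sqrt_weight_sum P p"
  shows "(\<Sum>a\<in>UNIV. (P x0 a)^2 / sqrt (sq_weight P p a)) \<le> sqrt_weight_sum P p"
proof -
  define B where "B = sq_weight P p"
  define D where "D = (\<Sum>a\<in>UNIV. ((P x0 a)^2 - B a) / sqrt (B a))"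
  define K where "K = (\<Sum>a\<in>UNIV. ((P x0 a)^2 - B a)^2 / (2 * B a * sqrt (B a)))"
  \<comment> \<open>\<open>D / 2\<close> is the derivative of \<open>sqrt_weight_sum P\<close> along the shift towards \<open>x0\<close>; \<open>K\<close> bounds the second-order term\<close>
  have B_nonneg: "0 \<le> B a" for a
    using sq_weight_nonneg[OF \<open>pdist p\<close>] by (simp add: B_def)
  have "0 \<le> K"
    unfolding K_def using B_nonneg by (intro sum_nonneg divide_nonneg_nonneg) auto
  moreover have "D / 2 \<le> t * K" if t: "0 < t" "t \<le> 1" for t
  proof -
    define q where "q = shift_toward p x0 t"
    have "sqrt (B a) + t * (((P x0 a)^2 - B a) / sqrt (B a) / 2)
          - t^2 * (((P x0 a)^2 - B a)^2 / (2 * B a * sqrt (B a)))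
        \<le> sqrt (sq_weight P q a)" for a
    proof -
      have q: "sq_weight P q a - B a = t * ((P x0 a)^2 - B a)"
        by (simp add: q_def B_def sq_weight_shift_toward algebra_simps)
      have "0 \<le> sq_weight P q a"
        using pdist_shift_toward[OF \<open>pdist p\<close>] t by (simp add: q_def sq_weight_nonneg)
      from sqrt_ge_second_order[OF this B_nonneg[of a]] show ?thesis
        by (simp add: q power_mult_distrib)
    qed
    then have "(\<Sum>a\<in>UNIV. sqrt (B a) + t * (((P x0 a)^2 - B a) / sqrt (B a) / 2)
          - t^2 * (((P x0 a)^2 - B a)^2 / (2 * B a * sqrt (B a)))) \<le> sqrt_weight_sum P q"
      unfolding sqrt_weight_sum_def by (rule sum_mono)
    then have "sqrt_weight_sum P p + t * (D / 2) - t^2 * K \<le> sqrt_weight_sum P q"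
      by (simp add: sqrt_weight_sum_def D_def K_def B_def sum_subtractf sum.distrib
          sum_distrib_left sum_divide_distrib)
    also have "\<dots> \<le> sqrt_weight_sum P p"
      using max pdist_shift_toward[OF \<open>pdist p\<close>] t by (simp add: q_def)
    finally have "t * (D / 2) \<le> t * (t * K)"
      by (simp add: power2_eq_square)
    then show ?thesis
      using t by simp
  qed
  ultimately have "D / 2 \<le> 0"
    by (rule nonpos_if_le_mult_small)
  moreover have "D = (\<Sum>a\<in>UNIV. (P x0 a)^2 / sqrt (B a)) - sqrt_weight_sum P p"
    using B_nonneg by (simp add: D_def B_def sqrt_weight_sum_def diff_divide_distrib sum_subtractf real_div_sqrt)
  ultimately show ?thesis
    by (simp add: B_def)
qed

lemma sum_UNIV_prod:
  "(\<Sum>v\<in>UNIV. g v) = (\<Sum>x\<in>(UNIV::'b::finite set). \<Sum>a\<in>(UNIV::'c::finite set). g (x, a))"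
  unfolding sum.cartesian_product UNIV_Times_UNIV by simp

lemma pdist_iff_margX:
  fixes Q :: "'x::finite \<times> 'a::finite \<Rightarrow> real"
  shows "pdist Q \<longleftrightarrow> (\<forall>v. 0 \<le> Q v) \<and> (\<Sum>x\<in>UNIV. margX Q x) = 1"
  by (simp add: pdist_def margX_def sum_UNIV_prod)

lemma pdist_margA:
  fixes Q :: "'x::finite \<times> 'a::finite \<Rightarrow> real"
  assumes "pdist Q"
  shows "pdist (margA Q)"
  using assms unfolding pdist_def margA_def
  by (auto intro: sum_nonneg simp: sum_UNIV_prod[of Q] sum.swap[of _ "UNIV::'x set"])

lemma le_margX: "(\<forall>v. 0 \<le> Q v) \<Longrightarrow> Q (x, a) \<le> margX Q x"
  unfolding margX_def by (rule member_le_sum) auto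

lemma le_margA: "(\<forall>v. 0 \<le> Q v) \<Longrightarrow> Q (x, a) \<le> margA Q a"
  unfolding margA_def by (rule member_le_sum[where f = "\<lambda>x. Q (x, a)"]) auto

lemma mutual_info_eq_sum:
  fixes Q :: "'x::finite \<times> 'a::finite \<Rightarrow> real"
  assumes nonneg: "\<forall>v. 0 \<le> Q v"
  shows "mutual_info Q
    = (\<Sum>x\<in>UNIV. \<Sum>a\<in>UNIV. Q (x, a) * log 2 (Q (x, a) / (margX Q x * margA Q a)))"
proof -
  have HX: "entropy (margX Q) = - (\<Sum>x\<in>UNIV. \<Sum>a\<in>UNIV. Q (x, a) * log 2 (margX Q x))"
    by (simp add: entropy_def margX_def sum_distrib_right)
  have HA: "entropy (margA Q) = - (\<Sum>x\<in>UNIV. \<Sum>a\<in>UNIV. Q (x, a) * log 2 (margA Q a))"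
    by (simp add: entropy_def margA_def sum_distrib_right sum.swap[of _ "UNIV::'x set"])
  have HXA: "entropy Q = - (\<Sum>x\<in>UNIV. \<Sum>a\<in>UNIV. Q (x, a) * log 2 (Q (x, a)))"
    by (simp add: entropy_def sum_UNIV_prod[of "\<lambda>v. Q v * log 2 (Q v)"])
  have "mutual_info Q = (\<Sum>x\<in>UNIV. \<Sum>a\<in>UNIV.
      Q (x, a) * log 2 (Q (x, a)) - Q (x, a) * log 2 (margX Q x) - Q (x, a) * log 2 (margA Q a))"
    unfolding mutual_info_def HX HA HXA by (simp add: sum_subtractf)
  also have "\<dots> = (\<Sum>x\<in>UNIV. \<Sum>a\<in>UNIV. Q (x, a) * log 2 (Q (x, a) / (margX Q x * margA Q a)))"
  proof (intro sum.cong refl)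
    fix x a
    show "Q (x, a) * log 2 (Q (x, a)) - Q (x, a) * log 2 (margX Q x) - Q (x, a) * log 2 (margA Q a)
        = Q (x, a) * log 2 (Q (x, a) / (margX Q x * margA Q a))"
    proof (cases "Q (x, a) = 0")
      case False
      then have "0 < Q (x, a)"
        using nonneg by (simp add: less_le)
      moreover from this have "0 < margX Q x" "0 < margA Q a"
        using le_margX[OF nonneg, of x a] le_margA[OF nonneg, of x a] by linarith+
      ultimately show ?thesis
        by (simp add: log_divide_pos log_mult_pos algebra_simps)
    qed simp
  qed
  finally show ?thesis .
qed

lemma cond_rel_entropy_eq_sum:
  fixes Q :: "'x::finite \<times> 'a::finite \<Rightarrow> real"
  assumes nonneg: "\<forall>v. 0 \<le> Q v"
  shows "cond_rel_entropy Q P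
    = (\<Sum>x\<in>UNIV. \<Sum>a\<in>UNIV. Q (x, a) * log 2 (Q (x, a) / (margX Q x * P x a)))"
  unfolding cond_rel_entropy_def
proof (intro sum.cong refl)
  fix x
  show "margX Q x * (\<Sum>a\<in>UNIV. Q (x, a) / margX Q x * log 2 (Q (x, a) / margX Q x / P x a))
      = (\<Sum>a\<in>UNIV. Q (x, a) * log 2 (Q (x, a) / (margX Q x * P x a)))"
  proof (cases "margX Q x = 0")
    case True
    then have "Q (x, a) = 0" for a
      using le_margX[OF nonneg, of x a] nonneg by (metis order_antisym)
    then show ?thesis
      using True by simp
  next
    case False
    then show ?thesis
      by (simp add: sum_distrib_left divide_divide_eq_left)
  qed
qed

lemma channel_nonneg: "channel P \<Longrightarrow> 0 \<le> P x a"
  by (simp add: channel_def)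

lemma sqrt_weight_sum_pos:
  fixes P :: "'x::finite \<Rightarrow> 'a::finite \<Rightarrow> real"
  assumes "channel P" "pdist p"
  shows "0 < sqrt_weight_sum P p"
proof -
  have "\<not> (\<forall>x. p x = 0)"
    using \<open>pdist p\<close> by (metis pdist_def sum.neutral zero_neq_one)
  then obtain x where "p x \<noteq> 0"
    by blast
  then have "0 < p x"
    using \<open>pdist p\<close> by (simp add: pdist_def less_le)
  have "\<not> (\<forall>a. P x a = 0)"
    using \<open>channel P\<close> by (metis channel_def sum.neutral zero_neq_one)
  then obtain a where "P x a \<noteq> 0"
    by blast
  with \<open>0 < p x\<close> have "0 < p x * (P x a)^2"
    by simp
  also have "\<dots> \<le> sq_weight P p a"
    unfolding sq_weight_def using \<open>pdist p\<close>
    by (intro member_le_sum[where f = "\<lambda>x. p x * (P x a)^2"]) (auto simp: pdist_def)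
  finally have "0 < sqrt (sq_weight P p a)"
    by simp
  also have "\<dots> \<le> sqrt_weight_sum P p"
    unfolding sqrt_weight_sum_def
    by (intro member_le_sum) (simp_all add: sq_weight_nonneg[OF \<open>pdist p\<close>])
  finally show ?thesis .
qed

definition opt_joint :: "('x::finite \<Rightarrow> 'a::finite \<Rightarrow> real) \<Rightarrow> ('x \<Rightarrow> real) \<Rightarrow> 'x \<times> 'a \<Rightarrow> real" where
  "opt_joint P p = (\<lambda>(x, a). p x * (P x a)^2 / (sqrt_weight_sum P p * sqrt (sq_weight P p a)))"

lemma margA_opt_joint:
  assumes "pdist p"
  shows "margA (opt_joint P p) a = sqrt (sq_weight P p a) / sqrt_weight_sum P p"
proof -
  have "margA (opt_joint P p) a = sq_weight P p a / (sqrt_weight_sum P p * sqrt (sq_weight P p a))"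
    by (simp add: margA_def opt_joint_def sq_weight_def sum_divide_distrib)
  also have "\<dots> = sqrt (sq_weight P p a) / sqrt_weight_sum P p"
    using sq_weight_nonneg[OF assms] by (metis divide_divide_eq_left mult.commute real_div_sqrt)
  finally show ?thesis .
qed

lemma margX_opt_joint:
  fixes P :: "'x::finite \<Rightarrow> 'a::finite \<Rightarrow> real"
  assumes "channel P" "pdist p"
    and max: "\<And>q. pdist q \<Longrightarrow> sqrt_weight_sum P q \<le> sqrt_weight_sum P p"
  shows "margX (opt_joint P p) = p"
proof
  fix x0
  define \<Phi> where "\<Phi> = sqrt_weight_sum P p"
  define S where "S x = (\<Sum>a\<in>UNIV. (P x a)^2 / sqrt (sq_weight P p a))" for x
  have p: "0 \<le> p x" "(\<Sum>x\<in>UNIV. p x) = 1" for x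
    using \<open>pdist p\<close> by (simp_all add: pdist_def)
  have "(\<Sum>x\<in>UNIV. p x * S x) = (\<Sum>a\<in>UNIV. sq_weight P p a / sqrt (sq_weight P p a))"
    by (simp add: S_def sq_weight_def sum_distrib_left sum_divide_distrib sum.swap[of _ "UNIV::'x set"])
  also have "\<dots> = \<Phi>"
    by (simp add: \<Phi>_def sqrt_weight_sum_def real_div_sqrt sq_weight_nonneg[OF \<open>pdist p\<close>])
  finally have "(\<Sum>x\<in>UNIV. p x * (\<Phi> - S x)) = 0"
    by (simp add: right_diff_distrib sum_subtractf flip: sum_distrib_right p(2))
  \<comment> \<open>complementary slackness: \<open>S \<le> \<Phi>\<close> everywhere, yet the \<open>p\<close>-average of \<open>S\<close> is \<open>\<Phi>\<close>\<close>
  moreover have "0 \<le> p x * (\<Phi> - S x)" for x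
    using maximizer_sum_sq_div_sqrt_le[OF \<open>pdist p\<close> max, of x] p(1)[of x]
    by (simp add: S_def \<Phi>_def)
  ultimately have "p x0 * (\<Phi> - S x0) = 0"
    by (simp add: sum_nonneg_eq_0_iff)
  moreover have "margX (opt_joint P p) x0 = p x0 * S x0 / \<Phi>"
    unfolding margX_def opt_joint_def S_def \<Phi>_def sum_distrib_left sum_divide_distrib
    by (intro sum.cong) (simp_all add: mult.commute)
  moreover have "0 < \<Phi>"
    using sqrt_weight_sum_pos[OF \<open>channel P\<close> \<open>pdist p\<close>] by (simp add: \<Phi>_def)
  ultimately show "margX (opt_joint P p) x0 = p x0"
    by (cases "p x0 = 0") auto
qed

lemma opt_joint_nonneg:
  assumes "channel P" "pdist p"
  shows "0 \<le> opt_joint P p v"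
  using sqrt_weight_sum_pos[OF assms] \<open>pdist p\<close>
  by (auto simp: opt_joint_def pdist_def case_prod_beta sq_weight_nonneg
      intro!: divide_nonneg_nonneg mult_nonneg_nonneg)

lemma pdist_opt_joint:
  assumes "channel P" "pdist p"
    and "\<And>q. pdist q \<Longrightarrow> sqrt_weight_sum P q \<le> sqrt_weight_sum P p"
  shows "pdist (opt_joint P p)"
proof -
  have "margX (opt_joint P p) = p"
    by (rule margX_opt_joint[OF assms])
  then show ?thesis
    using opt_joint_nonneg[OF assms(1,2)] \<open>pdist p\<close> by (simp add: pdist_iff_margX pdist_def)
qed

lemma abs_cont_opt_joint:
  assumes "channel P"
  shows "abs_cont (opt_joint P p) P"
  using channel_nonneg[OF assms] by (fastforce simp: abs_cont_def opt_joint_def less_le)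

lemma opt_joint_objective:
  fixes P :: "'x::finite \<Rightarrow> 'a::finite \<Rightarrow> real"
  assumes "channel P" "pdist p"
    and max: "\<And>q. pdist q \<Longrightarrow> sqrt_weight_sum P q \<le> sqrt_weight_sum P p"
  shows "mutual_info (opt_joint P p) - 2 * cond_rel_entropy (opt_joint P p) P
    = 2 * log 2 (sqrt_weight_sum P p)"
proof -
  define Q where "Q = opt_joint P p"
  define \<Phi> where "\<Phi> = sqrt_weight_sum P p"
  define r where "r a = sqrt (sq_weight P p a)" for a
  have "0 < \<Phi>"
    using sqrt_weight_sum_pos[OF \<open>channel P\<close> \<open>pdist p\<close>] by (simp add: \<Phi>_def)
  have nonneg: "\<forall>v. 0 \<le> Q v"
    using opt_joint_nonneg[OF \<open>channel P\<close> \<open>pdist p\<close>] by (simp add: Q_def)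
  have mX: "margX Q = p"
    unfolding Q_def by (rule margX_opt_joint[OF assms])
  have mA: "margA Q a = r a / \<Phi>" for a
    unfolding Q_def r_def \<Phi>_def by (rule margA_opt_joint[OF \<open>pdist p\<close>])
  have "Q (x, a) * log 2 (Q (x, a) / (p x * (r a / \<Phi>)))
      - 2 * (Q (x, a) * log 2 (Q (x, a) / (p x * P x a))) = Q (x, a) * (2 * log 2 \<Phi>)" for x a
  proof (cases "Q (x, a) = 0")
    case False
    then have "0 < p x" "0 < P x a" "0 < r a"
      using \<open>pdist p\<close> channel_nonneg[OF \<open>channel P\<close>, of x a] sq_weight_nonneg[OF \<open>pdist p\<close>]
      by (auto simp: Q_def opt_joint_def r_def pdist_def less_le)
    define s where "s = P x a / r a"
    have "0 < s"
      using \<open>0 < P x a\<close> \<open>0 < r a\<close> by (simp add: s_def)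
    have "Q (x, a) / (p x * (r a / \<Phi>)) = s^2" "Q (x, a) / (p x * P x a) = s / \<Phi>"
      using \<open>0 < p x\<close> \<open>0 < P x a\<close> \<open>0 < r a\<close> \<open>0 < \<Phi>\<close>
      by (simp_all add: Q_def opt_joint_def r_def \<Phi>_def s_def field_simps power2_eq_square)
    then show ?thesis
      using \<open>0 < s\<close> \<open>0 < \<Phi>\<close> by (simp add: log_divide_pos log_nat_power algebra_simps)
  qed simp
  note pointwise = this
  have "mutual_info Q - 2 * cond_rel_entropy Q P = (\<Sum>x\<in>UNIV. \<Sum>a\<in>UNIV.
      Q (x, a) * log 2 (Q (x, a) / (p x * (r a / \<Phi>)))
      - 2 * (Q (x, a) * log 2 (Q (x, a) / (p x * P x a))))"
    unfolding mutual_info_eq_sum[OF nonneg] cond_rel_entropy_eq_sum[OF nonneg] mX mA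
    by (simp only: sum_subtractf sum_distrib_left)
  also have "\<dots> = (\<Sum>x\<in>UNIV. \<Sum>a\<in>UNIV. Q (x, a) * (2 * log 2 \<Phi>))"
    by (simp only: pointwise)
  also have "\<dots> = 2 * log 2 \<Phi>"
    using pdist_opt_joint[OF assms] by (simp add: Q_def pdist_def sum_UNIV_prod flip: sum_distrib_right)
  finally show ?thesis
    by (simp add: Q_def \<Phi>_def)
qed

lemma margA_opt_joint_eq_0_imp:
  fixes P :: "'x::finite \<Rightarrow> 'a::finite \<Rightarrow> real"
  assumes "channel P" "pdist p"
    and max: "\<And>q. pdist q \<Longrightarrow> sqrt_weight_sum P q \<le> sqrt_weight_sum P p"
    and "margA (opt_joint P p) a = 0"
  shows "P x a = 0"
  using assms(4) sqrt_weight_sum_pos[OF assms(1,2)] sq_weight_nonneg[OF \<open>pdist p\<close>]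
    maximizer_sq_weight_zero[OF \<open>pdist p\<close> max]
  by (simp add: margA_opt_joint[OF \<open>pdist p\<close>])

lemma sum_sq_div_margA_opt_joint_le:
  fixes P :: "'x::finite \<Rightarrow> 'a::finite \<Rightarrow> real"
  assumes "channel P" "pdist p"
    and max: "\<And>q. pdist q \<Longrightarrow> sqrt_weight_sum P q \<le> sqrt_weight_sum P p"
  shows "(\<Sum>a\<in>UNIV. (P x a)^2 / margA (opt_joint P p) a) \<le> (sqrt_weight_sum P p)^2"
proof -
  have "(\<Sum>a\<in>UNIV. (P x a)^2 / margA (opt_joint P p) a)
      = sqrt_weight_sum P p * (\<Sum>a\<in>UNIV. (P x a)^2 / sqrt (sq_weight P p a))"
    by (simp add: margA_opt_joint[OF \<open>pdist p\<close>] sum_distrib_left ac_simps)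
  also have "\<dots> \<le> sqrt_weight_sum P p * sqrt_weight_sum P p"
    using maximizer_sum_sq_div_sqrt_le[OF \<open>pdist p\<close> max] sqrt_weight_sum_pos[OF assms(1,2)]
    by (intro mult_left_mono) auto
  finally show ?thesis
    by (simp add: power2_eq_square)
qed

lemma finite_seqs [simp]: "finite (seqs n :: 'a::finite list set)"
  using finite_lists_length_eq[of "UNIV::'a set" n] by (simp add: seqs_def)

lemma seqs_Suc: "seqs (Suc n) = (\<lambda>(a, as). a # as) ` (UNIV \<times> seqs n)"
  by (auto simp: seqs_def length_Suc_conv image_iff)

lemma replicate_in_seqs: "replicate n a \<in> seqs n"
  by (simp add: seqs_def)

lemma sum_seqs_prod_nth:
  fixes f :: "nat \<Rightarrow> 'a::finite \<Rightarrow> 'b::comm_semiring_1"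
  shows "(\<Sum>as\<in>seqs n. \<Prod>i<n. f i (as ! i)) = (\<Prod>i<n. \<Sum>a\<in>UNIV. f i a)"
proof (induction n arbitrary: f)
  case 0
  have "seqs 0 = {[] :: 'a list}"
    by (auto simp: seqs_def)
  then show ?case
    by simp
next
  case (Suc n)
  have inj: "inj_on (\<lambda>(a, as). a # as) (UNIV \<times> seqs n)"
    by (auto simp: inj_on_def)
  have "(\<Sum>as\<in>seqs (Suc n). \<Prod>i<Suc n. f i (as ! i))
      = (\<Sum>a\<in>UNIV. \<Sum>as\<in>seqs n. f 0 a * (\<Prod>i<n. f (Suc i) (as ! i)))"
    unfolding seqs_Suc sum.reindex[OF inj] sum.cartesian_product
    by (simp add: case_prod_unfold prod.lessThan_Suc_shift del: prod.lessThan_Suc)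
  also have "\<dots> = (\<Prod>i<Suc n. \<Sum>a\<in>UNIV. f i a)"
    by (simp add: Suc.IH[of "\<lambda>i. f (Suc i)"] sum_distrib_left[symmetric] sum_distrib_right prod.lessThan_Suc_shift
        del: prod.lessThan_Suc)
  finally show ?case .
qed

definition chan_pow :: "('x \<Rightarrow> 'a \<Rightarrow> real) \<Rightarrow> nat \<Rightarrow> 'x list \<Rightarrow> 'a list \<Rightarrow> real" where
  "chan_pow P n xs as = (\<Prod>i<n. P (xs ! i) (as ! i))"

lemma Pn_eq_chan_pow:
  "Pn P n xs as bs = (1 / real CARD('x)) ^ n * (chan_pow P n xs as * chan_pow P n xs bs)"
  for P :: "'x::finite \<Rightarrow> 'a::finite \<Rightarrow> real"
  by (simp add: Pn_def chan_pow_def prod.distrib)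

lemma chan_pow_nonneg: "channel P \<Longrightarrow> 0 \<le> chan_pow P n xs as"
  by (simp add: chan_pow_def channel_nonneg prod_nonneg)

lemma sum_chan_pow: "channel P \<Longrightarrow> (\<Sum>as\<in>seqs n. chan_pow P n xs as) = 1"
  using sum_seqs_prod_nth[of "\<lambda>i a. P (xs ! i) a"] by (simp add: chan_pow_def channel_def)

lemma sum_chan_pow_sq_div_le:
  fixes P :: "'x \<Rightarrow> 'a::finite \<Rightarrow> real"
  assumes "\<And>a. 0 \<le> R a" and "\<And>x. (\<Sum>a\<in>UNIV. (P x a)^2 / R a) \<le> c"
  shows "(\<Sum>as\<in>seqs n. (chan_pow P n xs as)^2 / (\<Prod>i<n. R (as ! i))) \<le> c ^ n"
proof -
  have "(\<Sum>as\<in>seqs n. (chan_pow P n xs as)^2 / (\<Prod>i<n. R (as ! i)))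
      = (\<Prod>i<n. \<Sum>a\<in>UNIV. (P (xs ! i) a)^2 / R a)"
    using sum_seqs_prod_nth[of "\<lambda>i a. (P (xs ! i) a)^2 / R a"]
    by (simp add: chan_pow_def prod_dividef flip: prod_power_distrib)
  also have "\<dots> \<le> (\<Prod>i<n. c)"
    using assms by (intro prod_mono conjI sum_nonneg divide_nonneg_nonneg) auto
  finally show ?thesis
    by simp
qed

definition seq_cond_pdist :: "nat \<Rightarrow> ('x list \<Rightarrow> 'a list \<Rightarrow> real) \<Rightarrow> bool" where
  "seq_cond_pdist n f \<longleftrightarrow>
     (\<forall>xs\<in>seqs n. \<forall>as\<in>seqs n. 0 \<le> f xs as) \<and> (\<forall>as\<in>seqs n. (\<Sum>xs\<in>seqs n. f xs as) = 1)"

lemma sum_sq_sum_chan_pow_sqrt_le: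
  fixes P :: "'x::finite \<Rightarrow> 'a::finite \<Rightarrow> real"
  assumes "pdist R" and supp: "\<And>x a. R a = 0 \<Longrightarrow> P x a = 0"
    and bound: "\<And>x. (\<Sum>a\<in>UNIV. (P x a)^2 / R a) \<le> c"
    and f: "seq_cond_pdist n f"
  shows "(\<Sum>xs\<in>seqs n. (\<Sum>as\<in>seqs n. chan_pow P n xs as * sqrt (f xs as))^2) \<le> c ^ n"
proof -
  define Rn where "Rn as = (\<Prod>i<n. R (as ! i))" for as
  have R: "0 \<le> R a" for a
    using \<open>pdist R\<close> by (simp add: pdist_def)
  then have Rn: "0 \<le> Rn as" for as
    by (simp add: Rn_def prod_nonneg)
  have "0 \<le> c"
    using bound[of undefined] R by (meson order_trans sum_nonneg divide_nonneg_nonneg zero_le_power2)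
  have f_nonneg: "0 \<le> f xs as" if "xs \<in> seqs n" "as \<in> seqs n" for xs as
    using f that by (simp add: seq_cond_pdist_def)
  have CS: "(\<Sum>as\<in>seqs n. chan_pow P n xs as * sqrt (f xs as))^2
      \<le> c ^ n * (\<Sum>as\<in>seqs n. Rn as * f xs as)" if "xs \<in> seqs n" for xs
  proof -
    have split: "chan_pow P n xs as * sqrt (f xs as)
        = chan_pow P n xs as / sqrt (Rn as) * (sqrt (Rn as) * sqrt (f xs as))" for as
    proof (cases "Rn as = 0")
      case True
      then obtain i where "i < n" "R (as ! i) = 0"
        by (auto simp: Rn_def)
      then show ?thesis
        using supp by (auto simp: chan_pow_def)
    qed simp
    have "(\<Sum>as\<in>seqs n. chan_pow P n xs as * sqrt (f xs as))^2
        \<le> (\<Sum>as\<in>seqs n. (chan_pow P n xs as / sqrt (Rn as))^2)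
          * (\<Sum>as\<in>seqs n. (sqrt (Rn as) * sqrt (f xs as))^2)"
      unfolding split by (rule Cauchy_Schwarz_ineq_sum)
    also have "\<dots> \<le> c ^ n * (\<Sum>as\<in>seqs n. Rn as * f xs as)"
      using sum_chan_pow_sq_div_le[where P = P, OF R bound, of n xs] Rn f_nonneg[OF that] \<open>0 \<le> c\<close>
      by (intro mult_mono) (auto simp: Rn_def power_divide power_mult_distrib intro!: sum_nonneg)
    finally show ?thesis .
  qed
  have "(\<Sum>xs\<in>seqs n. (\<Sum>as\<in>seqs n. chan_pow P n xs as * sqrt (f xs as))^2)
      \<le> (\<Sum>xs\<in>seqs n. c ^ n * (\<Sum>as\<in>seqs n. Rn as * f xs as))"
    using CS by (rule sum_mono)
  also have "\<dots> = c ^ n * (\<Sum>as\<in>seqs n. Rn as * (\<Sum>xs\<in>seqs n. f xs as))"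
    by (simp add: sum_distrib_left) (rule sum.swap)
  also have "\<dots> = c ^ n"
    using f \<open>pdist R\<close> sum_seqs_prod_nth[of "\<lambda>i. R" n]
    by (simp add: seq_cond_pdist_def Rn_def pdist_def)
  finally show ?thesis .
qed

(* By no-signalling the other party's input does not matter; replicate n undefined is just some
   element of seqs n. *)
definition ns_marg_left ::
  "nat \<Rightarrow> ('x list \<Rightarrow> 'x list \<Rightarrow> 'a list \<Rightarrow> 'a list \<Rightarrow> real) \<Rightarrow> 'x list \<Rightarrow> 'a list \<Rightarrow> real" where
  "ns_marg_left n Q y as = (\<Sum>z\<in>seqs n. Q y z as (replicate n undefined))"

definition ns_marg_right ::
  "nat \<Rightarrow> ('x list \<Rightarrow> 'x list \<Rightarrow> 'a list \<Rightarrow> 'a list \<Rightarrow> real) \<Rightarrow> 'x list \<Rightarrow> 'a list \<Rightarrow> real" where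
  "ns_marg_right n Q z bs = (\<Sum>y\<in>seqs n. Q y z (replicate n undefined) bs)"

lemma no_signalling_nonneg:
  assumes "no_signalling n Q" "y \<in> seqs n" "z \<in> seqs n" "as \<in> seqs n" "bs \<in> seqs n"
  shows "0 \<le> Q y z as bs"
  using assms unfolding no_signalling_def by blast

lemma no_signalling_sum:
  assumes "no_signalling n Q" "as \<in> seqs n" "bs \<in> seqs n"
  shows "(\<Sum>y\<in>seqs n. \<Sum>z\<in>seqs n. Q y z as bs) = 1"
  using assms unfolding no_signalling_def by blast

lemma no_signalling_sum_right:
  assumes "no_signalling n Q" "y \<in> seqs n" "as \<in> seqs n" "bs \<in> seqs n"
  shows "(\<Sum>z\<in>seqs n. Q y z as bs) = ns_marg_left n Q y as"
proof -
  have "\<forall>y\<in>seqs n. \<forall>a\<in>seqs n. \<forall>b\<in>seqs n. \<forall>b'\<in>seqs n.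
      (\<Sum>z\<in>seqs n. Q y z a b) = (\<Sum>z\<in>seqs n. Q y z a b')"
    using assms(1) unfolding no_signalling_def by (elim conjE)
  from this[rule_format, OF assms(2-4) replicate_in_seqs] show ?thesis
    by (simp add: ns_marg_left_def)
qed

lemma no_signalling_sum_left:
  assumes "no_signalling n Q" "z \<in> seqs n" "as \<in> seqs n" "bs \<in> seqs n"
  shows "(\<Sum>y\<in>seqs n. Q y z as bs) = ns_marg_right n Q z bs"
proof -
  have "\<forall>z\<in>seqs n. \<forall>a\<in>seqs n. \<forall>a'\<in>seqs n. \<forall>b\<in>seqs n.
      (\<Sum>y\<in>seqs n. Q y z a b) = (\<Sum>y\<in>seqs n. Q y z a' b)"
    using assms(1) unfolding no_signalling_def by (elim conjE)
  from this[rule_format, OF assms(2,3) replicate_in_seqs assms(4)] show ?thesis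
    by (simp add: ns_marg_right_def)
qed

lemma seq_cond_pdist_ns_marg_left:
  fixes Q :: "'x::finite list \<Rightarrow> 'x list \<Rightarrow> 'a::finite list \<Rightarrow> 'a list \<Rightarrow> real"
  assumes "no_signalling n Q"
  shows "seq_cond_pdist n (ns_marg_left n Q)"
  unfolding seq_cond_pdist_def ns_marg_left_def
proof (intro conjI ballI)
  fix y :: "'x list" and as :: "'a list"
  assume "y \<in> seqs n" "as \<in> seqs n"
  then show "0 \<le> (\<Sum>z\<in>seqs n. Q y z as (replicate n undefined))"
    by (intro sum_nonneg no_signalling_nonneg[OF assms] replicate_in_seqs)
next
  fix as :: "'a list"
  assume "as \<in> seqs n"
  then show "(\<Sum>y\<in>seqs n. \<Sum>z\<in>seqs n. Q y z as (replicate n undefined)) = 1"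
    by (rule no_signalling_sum[OF assms _ replicate_in_seqs])
qed

lemma seq_cond_pdist_ns_marg_right:
  fixes Q :: "'x::finite list \<Rightarrow> 'x list \<Rightarrow> 'a::finite list \<Rightarrow> 'a list \<Rightarrow> real"
  assumes "no_signalling n Q"
  shows "seq_cond_pdist n (ns_marg_right n Q)"
  unfolding seq_cond_pdist_def ns_marg_right_def
proof (intro conjI ballI)
  fix z :: "'x list" and bs :: "'a list"
  assume "z \<in> seqs n" "bs \<in> seqs n"
  then show "0 \<le> (\<Sum>y\<in>seqs n. Q y z (replicate n undefined) bs)"
    by (intro sum_nonneg no_signalling_nonneg[OF assms] replicate_in_seqs)
next
  fix bs :: "'a list"
  assume "bs \<in> seqs n"
  then show "(\<Sum>z\<in>seqs n. \<Sum>y\<in>seqs n. Q y z (replicate n undefined) bs) = 1"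
    by (subst sum.swap) (rule no_signalling_sum[OF assms replicate_in_seqs])
qed

lemma no_signalling_diag_le:
  assumes "no_signalling n Q" "y \<in> seqs n" "as \<in> seqs n" "bs \<in> seqs n"
  shows "Q y y as bs \<le> sqrt (ns_marg_left n Q y as) * sqrt (ns_marg_right n Q y bs)"
proof -
  have nonneg: "0 \<le> Q y' z as bs" if "y' \<in> seqs n" "z \<in> seqs n" for y' z
    using no_signalling_nonneg assms that by blast
  have "Q y y as bs \<le> ns_marg_left n Q y as"
    using member_le_sum[of y "seqs n" "\<lambda>z. Q y z as bs"] nonneg assms(2)
      no_signalling_sum_right[OF assms] by simp
  moreover have "Q y y as bs \<le> ns_marg_right n Q y bs"
    using member_le_sum[of y "seqs n" "\<lambda>y'. Q y' y as bs"] nonneg assms(2)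
      no_signalling_sum_left[OF assms] by simp
  ultimately have "(Q y y as bs)^2 \<le> ns_marg_left n Q y as * ns_marg_right n Q y bs"
    unfolding power2_eq_square using nonneg[OF assms(2,2)] by (intro mult_mono) auto
  then show ?thesis
    by (simp add: real_le_rsqrt flip: real_sqrt_mult)
qed

definition game_value ::
  "('x::finite \<Rightarrow> 'a::finite \<Rightarrow> real) \<Rightarrow> nat \<Rightarrow> ('x list \<Rightarrow> 'x list \<Rightarrow> 'a list \<Rightarrow> 'a list \<Rightarrow> real) \<Rightarrow> real" where
  "game_value P n Q = (\<Sum>xs\<in>seqs n. \<Sum>as\<in>seqs n. \<Sum>bs\<in>seqs n. Pn P n xs as bs * Q xs xs as bs)"

lemma omega_ns_eq_Sup: "omega_ns P n = Sup (game_value P n ` {Q. no_signalling n Q})"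
  unfolding omega_ns_def game_value_def by (simp add: setcompr_eq_image)

lemma game_value_le:
  fixes P :: "'x::finite \<Rightarrow> 'a::finite \<Rightarrow> real"
  assumes "channel P" "pdist R" and supp: "\<And>x a. R a = 0 \<Longrightarrow> P x a = 0"
    and bound: "\<And>x. (\<Sum>a\<in>UNIV. (P x a)^2 / R a) \<le> c"
    and ns: "no_signalling n Q"
  shows "game_value P n Q \<le> (c / real CARD('x)) ^ n"
proof -
  define k where "k = (1 / real CARD('x)) ^ n"
  define u where "u xs = (\<Sum>as\<in>seqs n. chan_pow P n xs as * sqrt (ns_marg_left n Q xs as))" for xs
  define v where "v xs = (\<Sum>bs\<in>seqs n. chan_pow P n xs bs * sqrt (ns_marg_right n Q xs bs))" for xs
  have "game_value P n Q \<le> (\<Sum>xs\<in>seqs n. \<Sum>as\<in>seqs n. \<Sum>bs\<in>seqs n.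
      k * ((chan_pow P n xs as * sqrt (ns_marg_left n Q xs as))
        * (chan_pow P n xs bs * sqrt (ns_marg_right n Q xs bs))))"
    unfolding game_value_def Pn_eq_chan_pow k_def[symmetric]
  proof (intro sum_mono)
    fix xs :: "'x list" and as bs :: "'a list"
    assume "xs \<in> seqs n" "as \<in> seqs n" "bs \<in> seqs n"
    from no_signalling_diag_le[OF ns this]
    have "k * (chan_pow P n xs as * chan_pow P n xs bs) * Q xs xs as bs
        \<le> k * (chan_pow P n xs as * chan_pow P n xs bs)
          * (sqrt (ns_marg_left n Q xs as) * sqrt (ns_marg_right n Q xs bs))"
      by (intro mult_left_mono) (simp_all add: k_def chan_pow_nonneg[OF \<open>channel P\<close>])
    then show "k * (chan_pow P n xs as * chan_pow P n xs bs) * Q xs xs as bs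
        \<le> k * ((chan_pow P n xs as * sqrt (ns_marg_left n Q xs as))
          * (chan_pow P n xs bs * sqrt (ns_marg_right n Q xs bs)))"
      by (simp add: ac_simps)
  qed
  also have "\<dots> = k * (\<Sum>xs\<in>seqs n. u xs * v xs)"
    unfolding u_def v_def sum_product by (simp only: sum_distrib_left)
  also have "\<dots> \<le> k * (\<Sum>xs\<in>seqs n. ((u xs)^2 + (v xs)^2) / 2)"
  proof (intro mult_left_mono sum_mono)
    fix xs
    have "0 \<le> (u xs - v xs)^2"
      by simp
    then show "u xs * v xs \<le> ((u xs)^2 + (v xs)^2) / 2"
      by (simp add: power2_eq_square algebra_simps)
  qed (simp add: k_def)
  also have "\<dots> \<le> k * ((c ^ n + c ^ n) / 2)"
    using sum_sq_sum_chan_pow_sqrt_le[where P = P, OF \<open>pdist R\<close> supp bound seq_cond_pdist_ns_marg_left[OF ns]]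
      sum_sq_sum_chan_pow_sqrt_le[where P = P, OF \<open>pdist R\<close> supp bound seq_cond_pdist_ns_marg_right[OF ns]]
    by (intro mult_left_mono) (simp_all add: k_def u_def v_def sum.distrib add_mono
        flip: sum_divide_distrib)
  also have "\<dots> = (c / real CARD('x)) ^ n"
    by (simp add: k_def power_divide)
  finally show ?thesis .
qed

definition const_strategy :: "'x list \<Rightarrow> 'x list \<Rightarrow> 'x list \<Rightarrow> 'a list \<Rightarrow> 'a list \<Rightarrow> real" where
  "const_strategy xs0 y z as bs = (if y = xs0 \<and> z = xs0 then 1 else 0)"

lemma no_signalling_const_strategy:
  assumes "xs0 \<in> seqs n"
  shows "no_signalling n (const_strategy xs0)"
proof -
  have "(\<Sum>z\<in>seqs n. const_strategy xs0 y z as bs) = (if y = xs0 then 1 else 0)"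
    and "(\<Sum>y\<in>seqs n. const_strategy xs0 y z as bs) = (if z = xs0 then 1 else 0)" for y z as bs
    using assms by (simp_all add: const_strategy_def sum.delta)
  then show ?thesis
    using assms by (simp add: no_signalling_def const_strategy_def sum.delta)
qed

lemma game_value_const_strategy:
  fixes P :: "'x::finite \<Rightarrow> 'a::finite \<Rightarrow> real"
  assumes "channel P" "xs0 \<in> seqs n"
  shows "game_value P n (const_strategy xs0) = (1 / real CARD('x)) ^ n"
proof -
  have "game_value P n (const_strategy xs0)
      = (\<Sum>xs\<in>seqs n. if xs = xs0 then \<Sum>as\<in>seqs n. \<Sum>bs\<in>seqs n. Pn P n xs as bs else 0)"
    unfolding game_value_def by (intro sum.cong) (simp_all add: const_strategy_def)
  also have "\<dots> = (\<Sum>as\<in>seqs n. \<Sum>bs\<in>seqs n. Pn P n xs0 as bs)"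
    using assms(2) by (simp add: sum.delta)
  also have "\<dots> = (1 / real CARD('x)) ^ n"
    by (simp add: Pn_eq_chan_pow sum_chan_pow[OF assms(1)] flip: sum_distrib_left sum_product)
  finally show ?thesis .
qed

lemma omega_ns_bounds:
  fixes P :: "'x::finite \<Rightarrow> 'a::finite \<Rightarrow> real"
  assumes "channel P" "pdist R" "\<And>x a. R a = 0 \<Longrightarrow> P x a = 0"
    and "\<And>x. (\<Sum>a\<in>UNIV. (P x a)^2 / R a) \<le> c"
  shows "(1 / real CARD('x)) ^ n \<le> omega_ns P n" and "omega_ns P n \<le> (c / real CARD('x)) ^ n"
proof -
  define V where "V = game_value P n ` {Q. no_signalling n Q}"
  have ub: "\<forall>v\<in>V. v \<le> (c / real CARD('x)) ^ n"
    using game_value_le[OF assms] by (auto simp: V_def)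
  have "(1 / real CARD('x)) ^ n \<in> V"
    using no_signalling_const_strategy[OF replicate_in_seqs]
      game_value_const_strategy[OF assms(1) replicate_in_seqs]
    unfolding V_def by (metis (mono_tags) image_eqI mem_Collect_eq)
  moreover have "bdd_above V"
    using ub by (auto simp: bdd_above_def)
  ultimately show "(1 / real CARD('x)) ^ n \<le> omega_ns P n"
    unfolding omega_ns_eq_Sup V_def[symmetric] by (rule cSup_upper)
  show "omega_ns P n \<le> (c / real CARD('x)) ^ n"
    unfolding omega_ns_eq_Sup V_def[symmetric]
    using ub \<open>(1 / real CARD('x)) ^ n \<in> V\<close> by (intro cSup_least) auto
qed

lemma limsup_log_div_le:
  fixes w :: "nat \<Rightarrow> real"
  assumes "1 < B" and pos: "\<And>n. 0 < w n" and le: "\<And>n. w n \<le> b ^ n"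
  shows "limsup (\<lambda>n. ereal (log B (w n) / real n)) \<le> ereal (log B b)"
proof (rule Limsup_bounded)
  have "0 < b"
    using pos[of 1] le[of 1] by simp
  have "log B (w n) / real n \<le> log B b" if "1 \<le> n" for n
  proof -
    have "log B (w n) \<le> log B (b ^ n)"
      using \<open>1 < B\<close> pos[of n] le[of n] by (intro log_mono) auto
    also have "\<dots> = real n * log B b"
      using \<open>1 < B\<close> \<open>0 < b\<close> by (simp add: log_nat_power)
    finally show ?thesis
      using that by (simp add: divide_le_eq mult.commute)
  qed
  then show "\<forall>\<^sub>F n in sequentially. ereal (log B (w n) / real n) \<le> ereal (log B b)"
    by (auto simp: eventually_sequentially)
qed

theorem mainTheorem3:
  fixes P :: "'x::finite \<Rightarrow> 'a::finite \<Rightarrow> real"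
  assumes "channel P"
  shows "limsup (\<lambda>n. ereal (log 2 (omega_ns P n) / real n)) \<le>
    (SUP Q\<in>{Q. pdist Q \<and> abs_cont Q P}. ereal (mutual_info Q - 2 * cond_rel_entropy Q P))
      - ereal (log 2 (real CARD('x)))"
proof -
  obtain p where "pdist p" and max: "\<And>q. pdist q \<Longrightarrow> sqrt_weight_sum P q \<le> sqrt_weight_sum P p"
    using sqrt_weight_sum_argmax_exists by blast
  define \<Phi> where "\<Phi> = sqrt_weight_sum P p"
  define Q where "Q = opt_joint P p"
  have "0 < \<Phi>"
    unfolding \<Phi>_def using sqrt_weight_sum_pos[OF assms \<open>pdist p\<close>] .
  have "pdist (margA Q)"
    unfolding Q_def by (intro pdist_margA pdist_opt_joint[OF assms \<open>pdist p\<close> max])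
  note omega = omega_ns_bounds[OF assms this
      margA_opt_joint_eq_0_imp[OF assms \<open>pdist p\<close> max, folded Q_def]
      sum_sq_div_margA_opt_joint_le[OF assms \<open>pdist p\<close> max, folded Q_def]]
  have "limsup (\<lambda>n. ereal (log 2 (omega_ns P n) / real n)) \<le> ereal (log 2 (\<Phi>^2 / real CARD('x)))"
    using omega by (intro limsup_log_div_le) (auto simp: \<Phi>_def intro: less_le_trans[OF _ omega(1)])
  also have "\<dots> = ereal (mutual_info Q - 2 * cond_rel_entropy Q P) - ereal (log 2 (real CARD('x)))"
    using \<open>0 < \<Phi>\<close> opt_joint_objective[OF assms \<open>pdist p\<close> max]
    by (simp add: Q_def \<Phi>_def log_divide_pos log_nat_power)
  also have "\<dots> \<le> (SUP Q\<in>{Q. pdist Q \<and> abs_cont Q P}. ereal (mutual_info Q - 2 * cond_rel_entropy Q P))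
      - ereal (log 2 (real CARD('x)))"
    using pdist_opt_joint[OF assms \<open>pdist p\<close> max] abs_cont_opt_joint[OF assms]
    by (intro ereal_minus_mono SUP_upper order_refl) (simp add: Q_def)
  finally show ?thesis .
qed

end
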